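(* For all $\alpha,\beta\in K\otimes\mathbb{C}$, $$\langle\alpha,\beta_0\rangle=\mathrm{rk}(\alpha)\deg(\beta)-\mathrm{rk}(\beta)\deg(\alpha)+\mathrm{rk}(\alpha)\mathrm{rk}(\beta)$$ and $$\langle\beta_0,\alpha\rangle=\mathrm{rk}(\beta)\deg(\alpha)-\mathrm{rk}(\alpha)\deg(\beta)+\mathrm{rk}(\alpha)\mathrm{rk}(\beta)\Big(\frac1{n-2}-1\Big).$$
   Context: Fix an integer $n\ge3$; $a_1=n-2$, $a_2=a_3=2$; $X=\mathbb{P}^1_{n-2,2,2}$ is the orbifold projective line with orbifold points of orders $n-2,2,2$. Its $K$-ring is $K=\mathbb{Z}[L_1,L_2,L_3]/\langle L_i^{a_i}-L_j^{a_j},(L_i-1)(L_j-1):i\neq j\rangle$, $L:=L_1^{n-2}$. $\mathrm{rk}:K\to\mathbb{Z}$ is the ring map $L_i\mapsto1$; $\deg:K\to\mathbb{Q}$ is additive with $\deg(1)=0$, $\deg(L_i)=1/a_i$, $\deg(EF)=\mathrm{rk}(E)\deg(F)+\mathrm{rk}(F)\deg(E)$; both extended linearly to $K\otimes\mathbb{C}$. $\langle a,b\rangle=\chi(a^\vee\otimes b)$ is the Euler pairing, extended bilinearly; equivalently $\langle a,b\rangle=\frac1{2\pi}(\Psi(a),e^{\pi\mathbf{i}\theta}e^{\pi\mathbf{i}\rho}\Psi(b))$, where $H$ has basis $\phi_{0,0}=1,\phi_{0,1}=P,\phi_{i,p}$ ($1\le i\le3$, $1\le p\le a_i-1$, twisted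 sectors), pairing $(\phi_{0,0},\phi_{0,1})=1$, $(\phi_{i,p},\phi_{i,a_i-p})=1/a_i$ and zero otherwise, $\theta(\phi_{0,0})=\frac12\phi_{0,0}$, $\theta(\phi_{0,1})=-\frac12\phi_{0,1}$, $\theta(\phi_{i,p})=(\frac12-\frac p{a_i})\phi_{i,p}$, $\rho\phi_{0,0}=\frac1{n-2}\phi_{0,1}$ and $\rho$ kills other basis vectors, and $\Psi(E)=\mathrm{rk}(E)(1-\frac{\gamma}{n-2}P)+2\pi\mathbf{i}\deg(E)P+\sum_{j,p}\Gamma(1-\frac p{a_j})\chi_{j,p}(E)\phi_{j,p}$ with $\gamma=-\Gamma'(1)+(n-2)\log Q$, $Q\in\mathbb{C}^*$, and $\chi_{j,p}$ the ring maps with $\chi_{j,p}(L_i)=e^{-2\pi\mathbf{i}p\delta_{j,i}/a_j}$. $\sigma:K\to K$ is multiplication by the tangent bundle class $T=L_1+L_2+L_3-L-1$. Put $\kappa=2(n-2)$ and for $\beta\in K\otimes\mathbb{C}$, $\beta_0=\frac1\kappa(\beta+\sigma(\beta)+\dots+\sigma^{\kappa-1}(\beta))$. *)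

theory Defs
  imports "HOL-Analysis.Analysis" "HOL-Library.Poly_Mapping" "HOL-Library.Product_Plus"
begin

text \<open>Elements of K tensor C are represented by polynomial representatives in
  C[L1,L2,L3]: finitely supported functions from exponent triples (e1,e2,e3)
  (monomial L1^e1 L2^e2 L3^e3) to coefficients.  All maps below (rk, deg, chi,
  Psi, sigma) are defined on representatives; they vanish on / preserve the
  defining ideal, so they descend to K tensor C.\<close>

type_synonym KC = "(nat \<times> nat \<times> nat) \<Rightarrow>\<^sub>0 complex"

definition orb_order :: "nat \<Rightarrow> nat \<Rightarrow> nat" where
  "orb_order n i = (if i = 1 then n - 2 else 2)"

definition expo :: "nat \<times> nat \<times> nat \<Rightarrow> nat \<Rightarrow> nat" where
  "expo m i = (case m of (e1, e2, e3) \<Rightarrow> if i = 1 then e1 else if i = 2 then e2 else e3)"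

definition Lgen :: "nat \<Rightarrow> KC" where
  "Lgen i = Poly_Mapping.single
     (if i = 1 then (1, 0, 0) else if i = 2 then (0, 1, 0) else (0, 0, 1)) 1"

definition Lbig :: "nat \<Rightarrow> KC" where
  "Lbig n = Lgen 1 ^ (n - 2)"

definition lin_ext :: "((nat \<times> nat \<times> nat) \<Rightarrow> complex) \<Rightarrow> KC \<Rightarrow> complex" where
  "lin_ext f x = (\<Sum>m\<in>Poly_Mapping.keys x. Poly_Mapping.lookup x m * f m)"

definition rk :: "KC \<Rightarrow> complex" where
  "rk x = lin_ext (\<lambda>m. 1) x"

text \<open>deg: additive, deg 1 = 0, deg L_i = 1/a_i, Leibniz rule; on a monomial
  L1^e1 L2^e2 L3^e3 this gives e1/a1 + e2/a2 + e3/a3.\<close>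
definition deg :: "nat \<Rightarrow> KC \<Rightarrow> complex" where
  "deg n x = lin_ext (\<lambda>m. \<Sum>i\<in>{1,2,3}. of_nat (expo m i) / of_nat (orb_order n i)) x"

definition chi :: "nat \<Rightarrow> nat \<Rightarrow> nat \<Rightarrow> KC \<Rightarrow> complex" where
  "chi n j p x = lin_ext (\<lambda>m. \<Prod>i\<in>{1,2,3}.
      exp (- 2 * of_real pi * \<i> * of_nat p * (if j = i then 1 else 0) / of_nat (orb_order n j))
        ^ expo m i) x"

datatype hidx = Phi00 | Phi01 | Tw nat nat

type_synonym HV = "hidx \<Rightarrow> complex"

definition gam :: "nat \<Rightarrow> complex \<Rightarrow> complex" where
  "gam n Q = - deriv Gamma 1 + of_nat (n - 2) * Ln Q"

definition tw_valid :: "nat \<Rightarrow> nat \<Rightarrow> nat \<Rightarrow> bool" where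
  "tw_valid n j p \<longleftrightarrow> j \<in> {1,2,3} \<and> 1 \<le> p \<and> p < orb_order n j"

definition Psi :: "nat \<Rightarrow> complex \<Rightarrow> KC \<Rightarrow> HV" where
  "Psi n Q x = (\<lambda>k. case k of
      Phi00 \<Rightarrow> rk x
    | Phi01 \<Rightarrow> - rk x * gam n Q / of_nat (n - 2) + 2 * of_real pi * \<i> * deg n x
    | Tw j p \<Rightarrow> (if tw_valid n j p
                 then Gamma (1 - of_nat p / of_nat (orb_order n j)) * chi n j p x else 0))"

definition Hpair :: "nat \<Rightarrow> HV \<Rightarrow> HV \<Rightarrow> complex" where
  "Hpair n v w = v Phi00 * w Phi01 + v Phi01 * w Phi00
     + (\<Sum>j\<in>{1,2,3}. \<Sum>p\<in>{1..<orb_order n j}.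
          v (Tw j p) * w (Tw j (orb_order n j - p)) / of_nat (orb_order n j))"

definition theta_ev :: "nat \<Rightarrow> hidx \<Rightarrow> complex" where
  "theta_ev n k = (case k of Phi00 \<Rightarrow> 1/2 | Phi01 \<Rightarrow> - 1/2
                   | Tw j p \<Rightarrow> 1/2 - of_nat p / of_nat (orb_order n j))"

text \<open>e^{pi i theta}: theta is diagonal in the basis.\<close>
definition exp_theta :: "nat \<Rightarrow> HV \<Rightarrow> HV" where
  "exp_theta n v = (\<lambda>k. exp (of_real pi * \<i> * theta_ev n k) * v k)"

definition rho :: "nat \<Rightarrow> HV \<Rightarrow> HV" where
  "rho n v = (\<lambda>k. if k = Phi01 then v Phi00 / of_nat (n - 2) else 0)"

text \<open>e^{pi i rho} = id + pi i rho, since rho^2 = 0.\<close>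
definition exp_rho :: "nat \<Rightarrow> HV \<Rightarrow> HV" where
  "exp_rho n v = (\<lambda>k. v k + of_real pi * \<i> * rho n v k)"

definition euler :: "nat \<Rightarrow> complex \<Rightarrow> KC \<Rightarrow> KC \<Rightarrow> complex" where
  "euler n Q a b = Hpair n (Psi n Q a) (exp_theta n (exp_rho n (Psi n Q b))) / (2 * of_real pi)"

definition Tclass :: "nat \<Rightarrow> KC" where
  "Tclass n = Lgen 1 + Lgen 2 + Lgen 3 - Lbig n - 1"

definition sigma :: "nat \<Rightarrow> KC \<Rightarrow> KC" where
  "sigma n x = Tclass n * x"

definition kappa :: "nat \<Rightarrow> nat" where
  "kappa n = 2 * (n - 2)"

definition beta0 :: "nat \<Rightarrow> KC \<Rightarrow> KC" where
  "beta0 n b = Poly_Mapping.map (\<lambda>c. c / of_nat (kappa n)) (\<Sum>k<kappa n. (sigma n ^^ k) b)"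

end

theory Submission
  imports Defs
begin

text \<open>Multiplication by the tangent class \<open>T\<close> fixes the rank, raises the degree by
  \<open>deg T = 1/(n-2)\<close> and multiplies each character \<open>\<chi>\<^sub>j\<^sub>,\<^sub>p\<close> by the nontrivial
  root of unity \<open>\<chi>\<^sub>j\<^sub>,\<^sub>p(T) = exp(-2\<pi>i p/a\<^sub>j)\<close>, whose order divides \<open>\<kappa>\<close>.
  Averaging over \<open>\<sigma>\<^sup>k\<close>, \<open>0 \<le> k < \<kappa>\<close>, therefore kills every twisted component of
  \<open>\<Psi>(\<beta>)\<close>, keeps the rank and shifts the degree by \<open>rk \<beta> (\<kappa>-1)/(2(n-2))\<close>.
  When one argument has no twisted components, the Euler pairing only sees
  the untwisted sector, where it equals
  \<open>rk a deg b - rk b deg a + rk a rk b/(2(n-2))\<close>; substituting the averaged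
  rank and degree gives both formulas.\<close>

lemma lin_ext_superset:
  assumes "finite S" "Poly_Mapping.keys x \<subseteq> S"
  shows "lin_ext f x = (\<Sum>m\<in>S. Poly_Mapping.lookup x m * f m)"
  unfolding lin_ext_def
  by (rule sum.mono_neutral_left) (use assms in \<open>auto simp: in_keys_iff\<close>)

lemma lin_ext_zero [simp]: "lin_ext f 0 = 0"
  by (simp add: lin_ext_def)

lemma lin_ext_add: "lin_ext f (x + y) = lin_ext f x + lin_ext f y"
  using keys_add[of x y]
  by (subst (1 2 3) lin_ext_superset[where S = "Poly_Mapping.keys x \<union> Poly_Mapping.keys y"])
     (auto simp: lookup_add sum.distrib algebra_simps)

lemma lin_ext_uminus: "lin_ext f (- x) = - lin_ext f x"
  by (simp add: lin_ext_def sum_negf)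

lemma lin_ext_diff: "lin_ext f (x - y) = lin_ext f x - lin_ext f y"
  using lin_ext_add[of f x "- y"] by (simp add: lin_ext_uminus)

lemma lin_ext_sum: "lin_ext f (\<Sum>k\<in>A. g k) = (\<Sum>k\<in>A. lin_ext f (g k))"
  by (induction A rule: infinite_finite_induct) (auto simp: lin_ext_add)

lemma lin_ext_single [simp]: "lin_ext f (Poly_Mapping.single a c) = c * f a"
  by (subst lin_ext_superset[where S = "{a}"]) auto

lemma lin_ext_map_divide:
  "lin_ext f (Poly_Mapping.map (\<lambda>c. c / k) x) = lin_ext f x / (k :: complex)"
proof -
  have lookup: "Poly_Mapping.lookup (Poly_Mapping.map (\<lambda>c. c / k) x) m = Poly_Mapping.lookup x m / k"
    for m by transfer (auto simp: when_def)
  then have "Poly_Mapping.keys (Poly_Mapping.map (\<lambda>c. c / k) x) \<subseteq> Poly_Mapping.keys x"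
    by (auto simp: in_keys_iff)
  then show ?thesis
    by (subst (1 2) lin_ext_superset[where S = "Poly_Mapping.keys x"])
       (auto simp: lookup sum_divide_distrib)
qed

lemma lin_ext_mult:
  "lin_ext f (x * y) = (\<Sum>a\<in>Poly_Mapping.keys x. \<Sum>b\<in>Poly_Mapping.keys y.
      Poly_Mapping.lookup x a * Poly_Mapping.lookup y b * f (a + b))"
proof -
  have expand: "z = (\<Sum>m\<in>Poly_Mapping.keys z. Poly_Mapping.single m (Poly_Mapping.lookup z m))"
    for z :: KC
    by (rule poly_mapping_eqI) (auto simp: lookup_sum lookup_single when_def in_keys_iff)
  have "x * y = (\<Sum>a\<in>Poly_Mapping.keys x. \<Sum>b\<in>Poly_Mapping.keys y.
      Poly_Mapping.single (a + b) (Poly_Mapping.lookup x a * Poly_Mapping.lookup y b))"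
    by (subst expand[of x], subst expand[of y]) (simp add: sum_product mult_single)
  then show ?thesis
    by (simp add: lin_ext_sum)
qed

lemma lin_ext_mult_of_hom:
  assumes "\<And>a b. f (a + b) = f a * f b"
  shows "lin_ext f (x * y) = lin_ext f x * lin_ext f y"
  unfolding lin_ext_mult assms by (simp add: lin_ext_def sum_product mult_ac)

lemma lin_ext_mult_of_additive:
  assumes "\<And>a b. f (a + b) = f a + f b"
  shows "lin_ext f (x * y) = lin_ext (\<lambda>_. 1) x * lin_ext f y + lin_ext f x * lin_ext (\<lambda>_. 1) y"
proof -
  have "lin_ext f (x * y) = (\<Sum>a\<in>Poly_Mapping.keys x. \<Sum>b\<in>Poly_Mapping.keys y.
      Poly_Mapping.lookup x a * (Poly_Mapping.lookup y b * f b))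
    + (\<Sum>a\<in>Poly_Mapping.keys x. \<Sum>b\<in>Poly_Mapping.keys y.
      Poly_Mapping.lookup x a * f a * Poly_Mapping.lookup y b)"
    unfolding lin_ext_mult assms by (simp add: distrib_left sum.distrib mult_ac)
  then show ?thesis
    by (simp add: lin_ext_def sum_product)
qed

lemma expo_add: "expo (a + b) i = expo a i + expo b i"
  by (cases a; cases b) (auto simp: expo_def)

lemma rk_mult: "rk (x * y) = rk x * rk y"
  unfolding rk_def by (rule lin_ext_mult_of_hom) simp

lemma deg_mult: "deg n (x * y) = rk x * deg n y + deg n x * rk y"
  unfolding rk_def deg_def
  by (rule lin_ext_mult_of_additive) (simp add: expo_add add_divide_distrib sum.distrib)

lemma chi_mult: "chi n j p (x * y) = chi n j p x * chi n j p y"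
  unfolding chi_def
  by (rule lin_ext_mult_of_hom) (simp add: expo_add power_add prod.distrib)

lemma one_eq_single: "(1 :: KC) = Poly_Mapping.single (0, 0, 0) 1"
proof -
  have "(0, 0, 0) = (0 :: nat \<times> nat \<times> nat)"
    by (simp add: zero_prod_def)
  then show ?thesis
    by simp
qed

lemma of_nat_neq_2:
  assumes "n \<ge> 3"
  shows "of_nat n \<noteq> (2 :: complex)"
proof
  assume "of_nat n = (2 :: complex)"
  then have "of_nat n = (of_nat 2 :: complex)"
    by simp
  then have "n = 2"
    by (simp only: of_nat_eq_iff)
  with assms show False
    by simp
qed

lemma Lbig_eq_single: "Lbig n = Poly_Mapping.single (n - 2, 0, 0) 1"
proof -
  have "Lgen 1 ^ k = Poly_Mapping.single (k, 0, 0) 1" for k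
    by (induction k) (auto simp: Lgen_def mult_single one_eq_single)
  then show ?thesis
    by (simp add: Lbig_def)
qed

lemma Tclass_eq_singles:
  "Tclass n = Poly_Mapping.single (1, 0, 0) 1 + Poly_Mapping.single (0, 1, 0) 1
     + Poly_Mapping.single (0, 0, 1) 1 - Poly_Mapping.single (n - 2, 0, 0) 1
     - Poly_Mapping.single (0, 0, 0) 1"
  by (simp add: Tclass_def Lbig_eq_single Lgen_def one_eq_single)

lemma rk_Tclass: "rk (Tclass n) = 1"
  by (simp add: Tclass_eq_singles rk_def lin_ext_add lin_ext_diff)

lemma deg_Tclass:
  assumes "n \<ge> 3"
  shows "deg n (Tclass n) = 1 / of_nat (n - 2)"
proof -
  have "of_nat (n - 2) \<noteq> (0 :: complex)" "of_nat n \<noteq> (2 :: complex)"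
    using assms of_nat_neq_2[OF assms] by simp_all
  then show ?thesis
    by (simp add: Tclass_eq_singles deg_def lin_ext_add lin_ext_diff expo_def orb_order_def)
qed

lemma exp_root_of_unity_power:
  "exp (- 2 * of_real pi * \<i> * of_nat p / of_nat a) ^ (a * q) = 1"
proof (cases "a = 0")
  case False
  have "exp (- 2 * of_real pi * \<i> * of_nat p / of_nat a) ^ a = exp (- 2 * of_real pi * \<i> * of_nat p)"
    using False by (simp add: exp_of_nat_mult[symmetric])
  also have "\<dots> = 1"
    by (simp add: exp_eq_1) (rule exI[of _ "- int p"], simp)
  finally show ?thesis
    by (simp add: power_mult)
qed simp

lemma exp_root_of_unity_neq_1:
  assumes "0 < p" "p < a"
  shows "exp (- 2 * of_real pi * \<i> * of_nat p / of_nat a) \<noteq> 1"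
proof
  assume "exp (- 2 * of_real pi * \<i> * of_nat p / of_nat a) = 1"
  then obtain k :: int where "- (2 * pi * real p / real a) = 2 * real_of_int k * pi"
    by (auto simp: exp_eq_1)
  then have "2 * pi * real_of_int k = 2 * pi * - (real p / real a)"
    by simp
  then have "real_of_int k = - (real p / real a)"
    by (simp only: mult_cancel_left) simp
  moreover have "0 < real p / real a" "real p / real a < 1"
    using assms by auto
  ultimately have "real_of_int (- 1) < real_of_int k \<and> real_of_int k < real_of_int 0"
    by simp
  then show False
    by (simp only: of_int_less_iff) presburger
qed

lemma chi_Tclass:
  assumes "n \<ge> 3" "tw_valid n j p"
  shows "chi n j p (Tclass n) = exp (- 2 * of_real pi * \<i> * of_nat p / of_nat (orb_order n j))"
proof (cases "j = 1")
  case True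
  have "exp (- 2 * of_real pi * \<i> * of_nat p / of_nat (n - 2)) ^ ((n - 2) * 1) = 1"
    by (rule exp_root_of_unity_power)
  then show ?thesis
    using True assms
    by (simp add: Tclass_eq_singles chi_def lin_ext_add lin_ext_diff expo_def orb_order_def)
next
  case False
  then have "p = 1" "orb_order n j = 2" "j \<in> {2, 3}"
    using assms(2) by (auto simp: tw_valid_def orb_order_def)
  then show ?thesis
    using False
    by (auto simp: Tclass_eq_singles chi_def lin_ext_add lin_ext_diff expo_def orb_order_def)
qed

lemma rk_sigma_iterate: "rk ((sigma n ^^ k) b) = rk b"
  by (induction k) (simp_all add: sigma_def rk_mult rk_Tclass)

lemma deg_sigma_iterate:
  assumes "n \<ge> 3"
  shows "deg n ((sigma n ^^ k) b) = deg n b + of_nat k * rk b / of_nat (n - 2)"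
proof (induction k)
  case (Suc k)
  have "(sigma n ^^ Suc k) b = Tclass n * (sigma n ^^ k) b"
    by (simp add: sigma_def)
  with Suc show ?case
    using assms of_nat_neq_2[OF assms] by (simp add: deg_mult rk_sigma_iterate rk_Tclass deg_Tclass
        algebra_simps add_divide_distrib)
qed simp

lemma chi_sigma_iterate: "chi n j p ((sigma n ^^ k) b) = chi n j p (Tclass n) ^ k * chi n j p b"
  by (induction k) (simp_all add: sigma_def chi_mult)

lemma lin_ext_beta0:
  "lin_ext f (beta0 n b) = (\<Sum>k<kappa n. lin_ext f ((sigma n ^^ k) b)) / of_nat (kappa n)"
  by (simp add: beta0_def lin_ext_map_divide lin_ext_sum)

lemma rk_beta0:
  assumes "n \<ge> 3"
  shows "rk (beta0 n b) = rk b"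
proof -
  have "rk (beta0 n b) = (\<Sum>k<kappa n. rk ((sigma n ^^ k) b)) / of_nat (kappa n)"
    by (simp only: rk_def lin_ext_beta0)
  then show ?thesis
    using assms of_nat_neq_2[OF assms] by (simp add: rk_sigma_iterate kappa_def)
qed

lemma deg_beta0:
  assumes "n \<ge> 3"
  shows "deg n (beta0 n b) = deg n b + rk b * (2 * of_nat (n - 2) - 1) / (2 * of_nat (n - 2))"
proof -
  define m :: complex where "m = of_nat (n - 2)"
  have "m \<noteq> 0"
    using assms of_nat_neq_2[OF assms] by (simp add: m_def)
  have kappa: "of_nat (kappa n) = 2 * m"
    by (simp add: kappa_def m_def)
  have gauss: "(\<Sum>k<N. of_nat k :: complex) = of_nat N * (of_nat N - 1) / 2" for N
    by (induction N) (auto simp: field_simps)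
  have "deg n (beta0 n b) = (\<Sum>k<kappa n. deg n ((sigma n ^^ k) b)) / of_nat (kappa n)"
    by (simp only: deg_def lin_ext_beta0)
  also have "\<dots> = (\<Sum>k<kappa n. deg n b + of_nat k * rk b / m) / of_nat (kappa n)"
    by (simp only: deg_sigma_iterate[OF assms] m_def)
  also have "\<dots> = (of_nat (kappa n) * deg n b + (\<Sum>k<kappa n. of_nat k) * rk b / m) / of_nat (kappa n)"
    by (simp add: sum.distrib sum_distrib_right sum_divide_distrib)
  also have "\<dots> = deg n b + rk b * (2 * m - 1) / (2 * m)"
    using \<open>m \<noteq> 0\<close> by (simp only: gauss kappa) (simp add: field_simps)
  finally show ?thesis
    by (simp add: m_def)
qed

lemma chi_beta0:
  assumes "n \<ge> 3" "tw_valid n j p"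
  shows "chi n j p (beta0 n b) = 0"
proof -
  define w where "w = chi n j p (Tclass n)"
  have "orb_order n j dvd kappa n"
    by (simp add: kappa_def orb_order_def)
  then obtain q where "kappa n = orb_order n j * q"
    by (rule dvdE)
  then have "w ^ kappa n = 1"
    using chi_Tclass[OF assms] exp_root_of_unity_power by (simp add: w_def)
  moreover have "w \<noteq> 1"
    using chi_Tclass[OF assms] exp_root_of_unity_neq_1 assms(2) by (simp add: w_def tw_valid_def)
  ultimately have "(\<Sum>k<kappa n. w ^ k) = 0"
    by (simp add: sum_gp_strict)
  have "chi n j p (beta0 n b) = (\<Sum>k<kappa n. chi n j p ((sigma n ^^ k) b)) / of_nat (kappa n)"
    by (simp only: chi_def lin_ext_beta0)
  then have "chi n j p (beta0 n b) = (\<Sum>k<kappa n. w ^ k) * chi n j p b / of_nat (kappa n)"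
    by (simp add: chi_sigma_iterate w_def sum_distrib_right)
  with \<open>(\<Sum>k<kappa n. w ^ k) = 0\<close> show ?thesis
    by simp
qed

lemma exp_theta_Phi00: "exp_theta n v Phi00 = \<i> * v Phi00"
proof -
  have "exp (of_real pi * \<i> * (1 / 2)) = cis (pi / 2)"
    by (simp add: cis_conv_exp mult_ac)
  then show ?thesis
    by (simp add: exp_theta_def theta_ev_def)
qed

lemma exp_theta_Phi01: "exp_theta n v Phi01 = - \<i> * v Phi01"
proof -
  have "exp (of_real pi * \<i> * (- 1 / 2)) = cis (- (pi / 2))"
    by (simp add: cis_conv_exp mult_ac)
  then show ?thesis
    by (simp add: exp_theta_def theta_ev_def)
qed

lemma euler_eq_untwisted:
  assumes "(\<forall>j p. Psi n Q a (Tw j p) = 0) \<or> (\<forall>j p. Psi n Q b (Tw j p) = 0)"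
  shows "euler n Q a b = rk a * deg n b - rk b * deg n a + rk a * rk b / (2 * of_nat (n - 2))"
proof -
  define m :: complex where "m = of_nat (n - 2)"
  have twisted: "(\<Sum>j\<in>{1,2,3}. \<Sum>p\<in>{1..<orb_order n j}.
      Psi n Q a (Tw j p) * exp_theta n (exp_rho n (Psi n Q b)) (Tw j (orb_order n j - p))
        / of_nat (orb_order n j)) = 0"
    using assms by (auto simp: exp_theta_def exp_rho_def rho_def)
  have "euler n Q a b = (rk a * (- \<i> * (- rk b * gam n Q / m + 2 * pi * \<i> * deg n b
        + pi * \<i> * (rk b / m))) + (- rk a * gam n Q / m + 2 * pi * \<i> * deg n a) * (\<i> * rk b))
      / (2 * pi)"
    unfolding euler_def Hpair_def twisted
    by (simp add: exp_theta_Phi00 exp_theta_Phi01 exp_rho_def rho_def Psi_def m_def)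
  also have "\<dots> = rk a * deg n b - rk b * deg n a + rk a * rk b / (2 * m)"
    by (simp add: field_simps)
  finally show ?thesis
    by (simp add: m_def)
qed

lemma Psi_beta0_untwisted:
  assumes "n \<ge> 3"
  shows "Psi n Q (beta0 n b) (Tw j p) = 0"
  using chi_beta0[OF assms] by (simp add: Psi_def)

theorem lemma7:
  fixes n :: nat and Q :: complex and \<alpha> \<beta> :: KC
  assumes "n \<ge> 3" and "Q \<noteq> 0"
  shows "euler n Q \<alpha> (beta0 n \<beta>) = rk \<alpha> * deg n \<beta> - rk \<beta> * deg n \<alpha> + rk \<alpha> * rk \<beta>
       \<and> euler n Q (beta0 n \<beta>) \<alpha> = rk \<beta> * deg n \<alpha> - rk \<alpha> * deg n \<beta>
           + rk \<alpha> * rk \<beta> * (1 / of_nat (n - 2) - 1)"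
proof -
  define m :: complex where "m = of_nat (n - 2)"
  have "m \<noteq> 0"
    using assms(1) of_nat_neq_2[OF assms(1)] by (simp add: m_def)
  have untwisted: "\<forall>j p. Psi n Q (beta0 n \<beta>) (Tw j p) = 0"
    using Psi_beta0_untwisted[OF assms(1)] by blast
  have pairing_left: "euler n Q \<alpha> (beta0 n \<beta>) = rk \<alpha> * (deg n \<beta> + rk \<beta> * (2 * m - 1) / (2 * m))
      - rk \<beta> * deg n \<alpha> + rk \<alpha> * rk \<beta> / (2 * m)"
    by (simp only: euler_eq_untwisted untwisted rk_beta0[OF assms(1)] deg_beta0[OF assms(1)]
        m_def simp_thms)
  have pairing_right: "euler n Q (beta0 n \<beta>) \<alpha> = rk \<beta> * deg n \<alpha>
      - rk \<alpha> * (deg n \<beta> + rk \<beta> * (2 * m - 1) / (2 * m)) + rk \<beta> * rk \<alpha> / (2 * m)"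
    by (simp only: euler_eq_untwisted untwisted rk_beta0[OF assms(1)] deg_beta0[OF assms(1)]
        m_def simp_thms)
  show ?thesis
    unfolding pairing_left pairing_right m_def[symmetric] using \<open>m \<noteq> 0\<close>
    by (simp add: field_simps)
qed

end
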